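(* Fix $0<\alpha'<\alpha<1$ and $a>0$. There exists $b>0$ such that for every integer $s\ge1$, $$\max_{\alpha' s\le k\le \alpha s}\ \mathbb E_k\Big[\exp\Big\{\frac{a\max_{0\le t\le 2s}x(t)}{\sqrt s}\Big\}\Big]\le b.$$
   Context: A Dyck path of length $2s$ is a sequence $x(0),\dots,x(2s)$ of integers with $x(0)=x(2s)=0$, $x(t)\ge0$ and $x(t)-x(t-1)=\pm1$. Step $t$ (from $t-1$ to $t$) is called odd if $t$ is odd. $\mathcal X_{s,k}$ is the set of Dyck paths of length $2s$ having exactly $k$ up steps at odd instants (its cardinality is the Narayana number $\frac1s\binom sk\binom s{k-1}$), and $\mathbb E_k$, $\mathbb P_k$ denote expectation and probability under the uniform distribution on $\mathcal X_{s,k}$. *)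

theory Defs
  imports "HOL-Probability.Probability"
begin

text \<open>A Dyck path of length 2s, represented as a function nat => int which is
  set to 0 beyond time 2s (so that the set of paths is a set of functions).\<close>
definition dyck_path :: "nat \<Rightarrow> (nat \<Rightarrow> int) \<Rightarrow> bool" where
  "dyck_path s x \<longleftrightarrow>
     x 0 = 0 \<and> x (2 * s) = 0 \<and>
     (\<forall>t\<le>2 * s. x t \<ge> 0) \<and>
     (\<forall>t\<in>{1..2 * s}. x t - x (t - 1) = 1 \<or> x t - x (t - 1) = -1) \<and>
     (\<forall>t>2 * s. x t = 0)"

definition odd_ups :: "nat \<Rightarrow> (nat \<Rightarrow> int) \<Rightarrow> nat" where
  "odd_ups s x = card {t\<in>{1..2 * s}. odd t \<and> x t - x (t - 1) = 1}"

definition dyck_X :: "nat \<Rightarrow> nat \<Rightarrow> (nat \<Rightarrow> int) set" where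
  "dyck_X s k = {x. dyck_path s x \<and> odd_ups s x = k}"

definition E_unif :: "nat \<Rightarrow> nat \<Rightarrow> ((nat \<Rightarrow> int) \<Rightarrow> real) \<Rightarrow> real" where
  "E_unif s k f = measure_pmf.expectation (pmf_of_set (dyck_X s k)) f"

end

theory Submission
  imports Defs "HOL-Combinatorics.Multiset_Permutations"
begin

text \<open>
  Cut a Dyck path of length 2s into its first step, the s-1 pairs of steps
  (2i, 2i+1) for 1 \<le> i < s, and its last step.  Each pair is one of four letters
  (-1: down-down, 0: up-down, 1: up-up, 2: down-up), and the path is recovered from the
  word of these letters followed by a final letter -1.  Half the displacement of a letter
  is its weight (-1, 0, 1, 0), and x(2t+1) = 2 psum(t) + 1 for the partial weight sums.
  Thus X_{s,k} is in bijection with the ballot words: words whose partial sums stay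
  \<ge> 0 before the end, with total sum -1 and with the letter counts prescribed by k.

  The maximum of such a word is controlled in three steps:
  (1) the cycle lemma: every word with total sum -1 is a rotation of exactly one ballot
      word by exactly one of s shifts, and high ballot words rotate into words whose
      partial sums leave the strip (-h, h);
  (2) the reflection principle: among all arrangements of a fixed multiset of letters,
      the ones reaching level \<plusminus>h are mapped injectively (reflect after the first
      hitting time) to arrangements of a multiset with about h letters 1 and -1
      exchanged, which are fewer by a factor exp(-h(h-1)/s);
  (3) summing these Gaussian tail bounds over blocks of length ~ sqrt s gives a bound
      on the exponential moment of max x / sqrt s which is uniform in s and k.
  The hypotheses on \<alpha>' and \<alpha> are only used to ensure 1 \<le> k \<le> s, i.e. X_{s,k} \<noteq> {}.
\<close>

section \<open>Words over the four-letter alphabet and their partial sums\<close>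

definition letters :: "int set" where "letters = {-1, 0, 1, 2}"

text \<open>The letter 2 stands for a down-up pair of steps and has weight 0.\<close>
definition weight :: "int \<Rightarrow> int" where "weight l = (if l = 2 then 0 else l)"

definition psum :: "int list \<Rightarrow> nat \<Rightarrow> int" where
  "psum w t = sum_list (map weight (take t w))"

lemma sum_weight_count:
  "set w \<subseteq> letters \<Longrightarrow> sum_list (map weight w) = int (count (mset w) 1) - int (count (mset w) (-1))"
  by (induction w) (auto simp: letters_def weight_def)

lemma length_count:
  "set w \<subseteq> letters \<Longrightarrow>
     length w = count (mset w) (-1) + count (mset w) 0 + count (mset w) 1 + count (mset w) 2"
  by (induction w) (auto simp: letters_def)

lemma psum_0 [simp]: "psum w 0 = 0"
  by (simp add: psum_def)

lemma psum_beyond: "length w \<le> t \<Longrightarrow> psum w t = psum w (length w)"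
  by (simp add: psum_def)

lemma psum_Suc: "t < length w \<Longrightarrow> psum w (Suc t) = psum w t + weight (w ! t)"
  by (simp add: psum_def take_Suc_conv_app_nth)

lemma weight_bound: "l \<in> letters \<Longrightarrow> \<bar>weight l\<bar> \<le> 1"
  by (auto simp: letters_def weight_def)

lemma psum_step:
  assumes "set w \<subseteq> letters" shows "\<bar>psum w (Suc t) - psum w t\<bar> \<le> 1"
proof (cases "t < length w")
  case True
  then have "w ! t \<in> letters" using assms nth_mem by blast
  then show ?thesis using True psum_Suc weight_bound by simp
next
  case False
  then show ?thesis using psum_beyond[of w t] psum_beyond[of w "Suc t"] by simp
qed

lemma discrete_ivt:
  fixes f :: "nat \<Rightarrow> int"
  assumes "f 0 \<le> c" "c \<le> f t" "\<And>i. \<bar>f (Suc i) - f i\<bar> \<le> 1"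
  shows "\<exists>i\<le>t. f i = c"
  using assms(2)
proof (induction t)
  case 0 then show ?case using assms(1) by auto
next
  case (Suc t)
  show ?case
  proof (cases "c \<le> f t")
    case True then show ?thesis using Suc.IH by (meson le_SucI)
  next
    case False
    then have "f (Suc t) = c" using Suc.prems assms(3)[of t] by auto
    then show ?thesis by blast
  qed
qed

lemma psum_hits_above:
  assumes "set w \<subseteq> letters" "0 \<le> c" "c \<le> psum w t" shows "\<exists>i. psum w i = c"
  using discrete_ivt[of "psum w" c t] assms psum_step by auto

lemma psum_hits_below:
  assumes "set w \<subseteq> letters" "c \<le> 0" "psum w t \<le> c" shows "\<exists>i. psum w i = c"
  using discrete_ivt[of "\<lambda>i. - psum w i" "-c" t] assms psum_step[OF assms(1)]
  by (auto simp: abs_minus_commute)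

lemma psum_rotate_before_seam:
  assumes "r \<le> length w" "t \<le> length w - r"
  shows "psum (drop r w @ take r w) t = psum w (r + t) - psum w r"
proof -
  have "t - (length w - r) = 0" using assms by simp
  then have prefix: "take t (drop r w @ take r w) = take t (drop r w)" by simp
  show ?thesis unfolding psum_def prefix take_add by simp
qed

lemma psum_rotate_after_seam:
  assumes "r \<le> length w" "length w - r \<le> t" "t \<le> length w"
  shows "psum (drop r w @ take r w) t = psum w (length w) - psum w r + psum w (t - (length w - r))"
proof -
  have "take t (drop r w @ take r w) = drop r w @ take (t - (length w - r)) w"
    using assms by (simp add: min_def)
  moreover have "sum_list (map weight (drop r w)) = psum w (length w) - psum w r"
  proof -
    have "sum_list (map weight w) = sum_list (map weight (take r w)) + sum_list (map weight (drop r w))"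
      by (metis append_take_drop_id map_append sum_list_append)
    then show ?thesis by (simp add: psum_def)
  qed
  ultimately show ?thesis
    unfolding psum_def[of "drop r w @ take r w"] psum_def[of w "t - (length w - r)"] by simp
qed

section \<open>The cycle lemma\<close>

text \<open>Words of length s with total sum -1 (one more letter -1 than letters 1) and with
  k - 1 letters in {1, 2}; these counts are forced by the encoding of X_{s,k} below.\<close>
definition words :: "nat \<Rightarrow> nat \<Rightarrow> int list set" where
  "words s k = {w. set w \<subseteq> letters \<and> length w = s
     \<and> count (mset w) (-1) = count (mset w) 1 + 1 \<and> count (mset w) 1 + count (mset w) 2 + 1 = k}"

definition ballot :: "int list \<Rightarrow> bool" where
  "ballot w \<longleftrightarrow> (\<forall>t<length w. psum w t \<ge> 0)"

definition ballot_words :: "nat \<Rightarrow> nat \<Rightarrow> int list set" where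
  "ballot_words s k = {w \<in> words s k. ballot w}"

lemma psum_words: assumes "w \<in> words s k" shows "psum w s = -1"
proof -
  have "psum w s = sum_list (map weight w)" using assms by (simp add: words_def psum_def)
  also have "\<dots> = -1" using assms sum_weight_count[of w] by (simp add: words_def)
  finally show ?thesis .
qed

lemma mset_rotate: "mset (rotate n xs) = mset xs"
  by (metis append_take_drop_id mset_append rotate_drop_take union_commute)

lemma rotate_words: "w \<in> words s k \<Longrightarrow> rotate r w \<in> words s k"
  by (simp add: words_def mset_rotate)

lemma finite_words: "finite (words s k)"
proof -
  have "words s k \<subseteq> {w. set w \<subseteq> letters \<and> length w = s}" by (auto simp: words_def)
  moreover have "finite {w. set w \<subseteq> letters \<and> length w = s}"
    by (rule finite_lists_length_eq) (simp add: letters_def)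
  ultimately show ?thesis by (rule finite_subset)
qed

lemma finite_ballot_words: "finite (ballot_words s k)"
  using finite_words by (simp add: ballot_words_def)

lemma rotate_eq_drop_take: "r \<le> length w \<Longrightarrow> rotate r w = drop r w @ take r w"
  by (cases "r = length w") (auto simp: rotate_drop_take)

lemma rotate_back: "length w = s \<Longrightarrow> r \<le> s \<Longrightarrow> rotate (s - r) (rotate r w) = w"
  by (simp add: rotate_rotate)

text \<open>A ballot word with total sum -1 has no nontrivial rotation that is a ballot word:
  the rotation by d has partial sum -1 - psum w d < 0 at time s - d.\<close>
lemma rotate_not_ballot:
  assumes "length w = s" "psum w s = -1" "ballot w" and d: "0 < d" "d < s"
  shows "\<not> ballot (rotate d w)"
proof
  assume rot: "ballot (rotate d w)"
  have "psum (rotate d w) (s - d) = psum w (d + (s - d)) - psum w d"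
    using assms by (simp add: rotate_eq_drop_take psum_rotate_before_seam)
  also have "\<dots> = -1 - psum w d" using d assms(2) by simp
  moreover have "psum w d \<ge> 0" using assms by (simp add: ballot_def)
  ultimately have "psum (rotate d w) (s - d) < 0" by linarith
  moreover have "s - d < length (rotate d w)" using d assms(1) by simp
  ultimately show False using rot unfolding ballot_def by fastforce
qed

text \<open>Conversely, rotating a word with total sum -1 at the first time where its partial
  sums attain their minimum over {1..s} gives a ballot word.\<close>
lemma rotate_to_ballot:
  assumes len: "length w = s" and s: "s \<ge> 1" and sum: "psum w s = -1"
  shows "\<exists>p\<in>{1..s}. ballot (rotate p w)"
proof -
  define m where "m = Min (psum w ` {1..s})"
  have fin: "finite (psum w ` {1..s})" "psum w ` {1..s} \<noteq> {}" using s by auto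
  have "m \<in> psum w ` {1..s}" using Min_in[OF fin] m_def by simp
  then have ex: "\<exists>p. p \<in> {1..s} \<and> psum w p = m" by auto
  define p where "p = (LEAST p. p \<in> {1..s} \<and> psum w p = m)"
  have p: "p \<in> {1..s}" "psum w p = m" using LeastI_ex[OF ex] p_def by simp_all
  have first: "\<And>q. q \<in> {1..s} \<Longrightarrow> psum w q = m \<Longrightarrow> p \<le> q"
    unfolding p_def by (simp add: Least_le)
  have min: "\<And>q. q \<in> {1..s} \<Longrightarrow> m \<le> psum w q" using fin m_def by simp
  have before: "\<And>q. q \<in> {1..s} \<Longrightarrow> q < p \<Longrightarrow> m + 1 \<le> psum w q"
  proof -
    fix q assume q: "q \<in> {1..s}" "q < p"
    then have "psum w q \<noteq> m" using first by fastforce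
    then show "m + 1 \<le> psum w q" using min[OF q(1)] by simp
  qed
  have "ballot (rotate p w)"
    unfolding ballot_def
  proof (intro allI impI)
    fix t assume "t < length (rotate p w)"
    then have t: "t < s" using len by simp
    have rot: "rotate p w = drop p w @ take p w" using p len by (simp add: rotate_eq_drop_take)
    show "0 \<le> psum (rotate p w) t"
    proof (cases "t \<le> s - p")
      case True
      then have "psum (rotate p w) t = psum w (p + t) - psum w p"
        using p len by (simp add: rot psum_rotate_before_seam)
      moreover have "p + t \<in> {1..s}" using True p by auto
      ultimately show ?thesis using min p by fastforce
    next
      case False
      then have "psum (rotate p w) t = psum w s - psum w p + psum w (t - (s - p))"
        using p len t by (simp add: rot psum_rotate_after_seam)
      moreover have "t - (s - p) \<in> {1..s}" "t - (s - p) < p" using False p t by auto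
      ultimately show ?thesis using before p sum by fastforce
    qed
  qed
  then show ?thesis using p by blast
qed

lemma shift_mod_zero:
  fixes r r' s :: nat
  assumes "(s - r + r') mod s = 0" "r < s" "r' < s" shows "r = r'"
proof (cases "r \<le> r'")
  case True
  have "s - r + r' = (r' - r) + s" using True assms(2) by simp
  then have "(r' - r) mod s = 0" using assms(1) by (simp only: mod_add_self2)
  then show ?thesis using True assms(3) by simp
next
  case False
  then show ?thesis using assms by simp
qed

text \<open>Uniqueness: two rotations of ballot words can only agree if they are the same rotation
  of the same word, since a ballot word has no nontrivial ballot rotation.\<close>
lemma rotation_inj: "inj_on (\<lambda>(w, r). rotate r w) (ballot_words s k \<times> {..<s})"
proof (rule inj_onI, clarsimp)
  fix w r w' r'
  assume w: "w \<in> ballot_words s k" "r < s" and w': "w' \<in> ballot_words s k" "r' < s"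
    and eq: "rotate r w = rotate r' w'"
  have len: "length w = s" "length w' = s" using w w' by (auto simp: ballot_words_def words_def)
  define d where "d = (s - r + r') mod s"
  have "w = rotate (s - r) (rotate r w)" using rotate_back[OF len(1)] w by simp
  also have "\<dots> = rotate (s - r + r') w'" by (simp add: eq rotate_rotate)
  also have "\<dots> = rotate d w'" unfolding d_def len(2)[symmetric] by (rule rotate_conv_mod)
  finally have wd: "w = rotate d w'" .
  have "d = 0"
  proof (rule ccontr)
    assume "d \<noteq> 0"
    moreover have "d < s" using w(2) by (simp add: d_def)
    ultimately have "\<not> ballot (rotate d w')"
      using w' len psum_words by (intro rotate_not_ballot) (auto simp: ballot_words_def)
    then show False using wd w by (simp add: ballot_words_def)
  qed
  moreover have "r = r'" using \<open>d = 0\<close> shift_mod_zero[of s r r'] w(2) w'(2) by (simp add: d_def)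
  ultimately show "w = w' \<and> r = r'" using wd by simp
qed

text \<open>Existence: rotate back the ballot rotation found by the first minimum.\<close>
lemma rotation_onto:
  assumes s: "s \<ge> 1"
  shows "words s k \<subseteq> (\<lambda>(w, r). rotate r w) ` (ballot_words s k \<times> {..<s})"
proof
  fix w assume w: "w \<in> words s k"
  then have len: "length w = s" by (simp add: words_def)
  obtain p where p: "p \<in> {1..s}" "ballot (rotate p w)"
    using rotate_to_ballot[OF len s psum_words[OF w]] by blast
  have "rotate p w \<in> ballot_words s k" using p w rotate_words by (simp add: ballot_words_def)
  moreover have "w = rotate (s - p) (rotate p w)" using rotate_back[OF len] p by simp
  moreover have "s - p < s" using p by auto
  ultimately show "w \<in> (\<lambda>(w, r). rotate r w) ` (ballot_words s k \<times> {..<s})" by force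
qed

lemma rotation_bij:
  assumes s: "s \<ge> 1"
  shows "bij_betw (\<lambda>(w, r). rotate r w) (ballot_words s k \<times> {..<s}) (words s k)"
proof (rule bij_betw_imageI[OF rotation_inj])
  show "(\<lambda>(w, r). rotate r w) ` (ballot_words s k \<times> {..<s}) = words s k"
    using rotation_onto[OF s] by (auto simp: ballot_words_def rotate_words)
qed

lemma card_words:
  assumes "s \<ge> 1" shows "card (words s k) = s * card (ballot_words s k)"
proof -
  have "card (ballot_words s k \<times> {..<s}) = card (words s k)"
    using bij_betw_same_card[OF rotation_bij[OF assms]] .
  then show ?thesis by (simp add: card_cartesian_product mult.commute)
qed

definition escapes :: "int \<Rightarrow> int list \<Rightarrow> bool" where
  "escapes h v \<longleftrightarrow> (\<exists>t. psum v t \<ge> h) \<or> (\<exists>t. psum v t \<le> -h)"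

text \<open>If a word with total sum -1 reaches 2h, each of its rotations escapes (-h, h): the
  rotation passes both through the old value at the top and through the seam, and these
  two partial sums differ by at least 2h.\<close>
lemma rotate_escapes:
  assumes len: "length w = s" and sum: "psum w s = -1"
    and r: "r < s" and t0: "t0 < s" "psum w t0 \<ge> 2 * h"
  shows "escapes h (rotate r w)"
proof -
  define v where "v = rotate r w"
  have v: "v = drop r w @ take r w" using r len by (simp add: v_def rotate_eq_drop_take)
  have seam: "psum v (s - r) = -1 - psum w r" using r len sum by (simp add: v psum_rotate_before_seam)
  have "\<exists>t. psum v t - psum v (s - r) \<ge> 2 * h"
  proof (cases "r \<le> t0")
    case True
    then have "psum v (t0 - r) = psum w t0 - psum w r" using r len t0 by (simp add: v psum_rotate_before_seam)
    then show ?thesis using seam t0 by (intro exI[of _ "t0 - r"]) auto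
  next
    case False
    then have "psum v (s - r + t0) = psum w s - psum w r + psum w t0"
      using r len t0 by (simp add: v psum_rotate_after_seam)
    then show ?thesis using seam t0 sum by (intro exI[of _ "s - r + t0"]) auto
  qed
  then obtain t where "psum v t - psum v (s - r) \<ge> 2 * h" by blast
  then have "psum v t \<ge> h \<or> psum v (s - r) \<le> - h" by linarith
  then show ?thesis unfolding escapes_def v_def by blast
qed

section \<open>The reflection principle\<close>

definition flip :: "int \<Rightarrow> int" where
  "flip l = (if l = 1 then -1 else if l = -1 then 1 else l)"

definition first_hit :: "int \<Rightarrow> int list \<Rightarrow> nat" where
  "first_hit c v = (LEAST t. psum v t = c)"

definition reflect :: "int \<Rightarrow> int list \<Rightarrow> int list" where
  "reflect c v = take (first_hit c v) v @ map flip (drop (first_hit c v) v)"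

lemma count_image_flip:
  "count (image_mset flip U) 1 = count U (-1)"
  "count (image_mset flip U) (-1) = count U 1"
  "x \<noteq> 1 \<Longrightarrow> x \<noteq> -1 \<Longrightarrow> count (image_mset flip U) x = count U x"
  by (induction U) (auto simp: flip_def)

lemma flip_flip [simp]: "flip \<circ> flip = id"
  by (auto simp: flip_def)

lemma first_hit:
  assumes "psum v t = c" shows "psum v (first_hit c v) = c" "first_hit c v \<le> length v"
proof -
  show "psum v (first_hit c v) = c" unfolding first_hit_def using assms by (rule LeastI)
  show "first_hit c v \<le> length v"
  proof (cases "t \<le> length v")
    case True
    have "first_hit c v \<le> t" unfolding first_hit_def using assms by (rule Least_le)
    then show ?thesis using True by simp
  next
    case False
    then have "psum v (length v) = c" using assms psum_beyond[of v t] by simp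
    then show ?thesis unfolding first_hit_def by (rule Least_le)
  qed
qed

lemma reflect_counts:
  assumes L: "set v \<subseteq> letters" and hit: "psum v t = c"
  shows "int (count (mset (reflect c v)) 1) = int (count (mset v) (-1)) + c"
        "int (count (mset (reflect c v)) (-1)) = int (count (mset v) 1) - c"
        "x \<noteq> 1 \<Longrightarrow> x \<noteq> -1 \<Longrightarrow> count (mset (reflect c v)) x = count (mset v) x"
proof -
  let ?P = "take (first_hit c v) v" and ?S = "drop (first_hit c v) v"
  have mv: "mset v = mset ?P + mset ?S" by (metis append_take_drop_id mset_append)
  have "set ?P \<subseteq> letters" using L by (meson order_trans set_take_subset)
  moreover have "psum v (first_hit c v) = sum_list (map weight ?P)" by (simp add: psum_def)
  ultimately have c: "c = int (count (mset ?P) 1) - int (count (mset ?P) (-1))"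
    using first_hit(1)[OF hit] sum_weight_count by simp
  have mr: "mset (reflect c v) = mset ?P + mset (map flip ?S)" by (simp add: reflect_def)
  show "int (count (mset (reflect c v)) 1) = int (count (mset v) (-1)) + c"
    using c by (simp add: mr mv count_image_flip)
  show "int (count (mset (reflect c v)) (-1)) = int (count (mset v) 1) - c"
    using c by (simp add: mr mv count_image_flip)
  show "x \<noteq> 1 \<Longrightarrow> x \<noteq> -1 \<Longrightarrow> count (mset (reflect c v)) x = count (mset v) x"
    by (simp add: mr mv count_image_flip)
qed

lemma reflect_reflect:
  assumes hit: "psum v t = c" shows "reflect c (reflect c v) = v"
proof -
  define T where "T = first_hit c v"
  have T: "psum v T = c" "T \<le> length v" using first_hit[OF hit] T_def by auto
  have prefix: "take T (reflect c v) = take T v" using T by (simp add: reflect_def T_def)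
  have suffix: "drop T (reflect c v) = map flip (drop T v)" using T by (simp add: reflect_def T_def)
  have same_psum: "psum (reflect c v) t = psum v t" if "t \<le> T" for t
  proof -
    have "take t (reflect c v) = take t v" using prefix that by (metis min.absorb1 take_take)
    then show ?thesis by (simp add: psum_def)
  qed
  have "first_hit c (reflect c v) = T"
    unfolding first_hit_def
  proof (rule Least_equality)
    show "psum (reflect c v) T = c" using same_psum T by simp
    fix y assume y: "psum (reflect c v) y = c"
    show "T \<le> y"
    proof (rule ccontr)
      assume "\<not> T \<le> y"
      then have "psum v y = c" using y same_psum by simp
      then have "T \<le> y" unfolding T_def first_hit_def by (rule Least_le)
      then show False using \<open>\<not> T \<le> y\<close> by simp
    qed
  qed
  then show ?thesis unfolding reflect_def[of c "reflect c v"] using prefix suffix by simp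
qed

lemma inj_on_reflect: "inj_on (reflect c) {v. \<exists>t. psum v t = c}"
  by (rule inj_on_inverseI[where g = "reflect c"]) (auto intro: reflect_reflect)

lemma card_hitting_le:
  assumes "\<And>v t. v \<in> permutations_of_multiset M \<Longrightarrow> psum v t = c \<Longrightarrow> mset (reflect c v) = M'"
  shows "card {v \<in> permutations_of_multiset M. \<exists>t. psum v t = c} \<le> card (permutations_of_multiset M')"
proof (rule card_inj_on_le)
  show "inj_on (reflect c) {v \<in> permutations_of_multiset M. \<exists>t. psum v t = c}"
    by (rule inj_on_subset[OF inj_on_reflect]) auto
  show "reflect c ` {v \<in> permutations_of_multiset M. \<exists>t. psum v t = c} \<subseteq> permutations_of_multiset M'"
    using assms by (auto intro: permutations_of_multisetI)
qed simp

definition exchange :: "nat \<Rightarrow> 'a \<Rightarrow> 'a \<Rightarrow> 'a multiset \<Rightarrow> 'a multiset" where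
  "exchange g a b M = M - replicate_mset g b + replicate_mset g a"

lemma count_exchange:
  assumes "a \<noteq> b"
  shows "count (exchange g a b M) x =
           (if x = a then count M a + g else if x = b then count M b - g else count M x)"
  using assms by (auto simp: exchange_def)

lemma exchange_Suc:
  assumes "a \<noteq> b" "g < count M b"
  shows "exchange (Suc g) a b M = exchange g a b M - {#b#} + {#a#}"
  by (rule multiset_eqI) (use assms in \<open>auto simp: count_exchange\<close>)

lemma count_two_le_size:
  assumes "a \<noteq> b" shows "count M a + count M b \<le> size M"
proof -
  have "replicate_mset (count M a) a + replicate_mset (count M b) b \<subseteq># M"
    using assms by (auto simp: subseteq_mset_def)
  from size_mset_mono[OF this] show ?thesis by simp
qed

lemma card_perms_move_one:
  assumes "a \<noteq> b" "b \<in># N"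
  shows "card (permutations_of_multiset (N - {#b#} + {#a#})) * (count N a + 1)
           = card (permutations_of_multiset N) * count N b"
proof -
  define A where "A = N - {#b#}"
  have N: "N = A + {#b#}" using assms by (simp add: A_def)
  have "card (permutations_of_multiset (A + {#a#})) * (count A a + 1)
          = (size A + 1) * card (permutations_of_multiset A)"
    by (rule card_permutations_of_multiset_insert_aux)
  also have "\<dots> = card (permutations_of_multiset N) * (count A b + 1)"
    using card_permutations_of_multiset_insert_aux[of A b] N by simp
  finally show ?thesis using assms by (simp add: A_def)
qed

lemma move_ratio_bound:
  fixes p q g n :: real
  assumes "0 \<le> p" "0 \<le> g" "q \<le> p + 1" "p + g + 1 \<le> n"
  shows "(q - g) / (p + g + 1) \<le> exp (- (2 * g) / n)"
proof -
  have pos: "p + g + 1 > 0" using assms by simp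
  have "(q - g) / (p + g + 1) \<le> (p + 1 - g) / (p + g + 1)"
    using assms pos by (simp add: divide_right_mono)
  also have "\<dots> = 1 - 2 * g / (p + g + 1)" using pos by (simp add: field_simps)
  also have "\<dots> \<le> 1 - 2 * g / n" using assms pos by (simp add: frac_le)
  also have "\<dots> \<le> exp (- (2 * g) / n)" using exp_ge_add_one_self[of "- (2 * g / n)"] by simp
  finally show ?thesis .
qed

lemma card_perms_exchange_Suc:
  assumes ab: "a \<noteq> b" and g: "g < count M b" and balance: "count M b \<le> count M a + 1"
    and n: "size M \<le> n"
  shows "real (card (permutations_of_multiset (exchange (Suc g) a b M)))
           \<le> exp (- (2 * real g) / real n) * real (card (permutations_of_multiset (exchange g a b M)))"
proof -
  define N where "N = exchange g a b M"
  define C where "C = real (card (permutations_of_multiset (exchange (Suc g) a b M)))"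
  define CN where "CN = real (card (permutations_of_multiset N))"
  define p where "p = real (count M a)"
  define q where "q = real (count M b)"
  have cN: "count N a = count M a + g" "count N b = count M b - g"
    using ab by (simp_all add: N_def count_exchange)
  have "count N b > 0" using cN g by simp
  then have "b \<in># N" by (simp only: count_greater_zero_iff)
  then have "card (permutations_of_multiset (N - {#b#} + {#a#})) * (count N a + 1)
               = card (permutations_of_multiset N) * count N b"
    by (rule card_perms_move_one[OF ab])
  moreover have "exchange (Suc g) a b M = N - {#b#} + {#a#}"
    unfolding N_def using ab g by (rule exchange_Suc)
  ultimately have "C * (p + g + 1) = CN * (q - g)"
    using cN g unfolding C_def CN_def p_def q_def
    by (metis (mono_tags, lifting) of_nat_add of_nat_mult of_nat_1 of_nat_diff less_imp_le_nat)
  moreover have "p + g + 1 > 0" unfolding p_def by (simp add: add_pos_nonneg)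
  ultimately have C: "C = CN * ((q - g) / (p + g + 1))" by (simp add: field_simps)
  have "p + q \<le> size M" using count_two_le_size[OF ab, of M] by (simp add: p_def q_def)
  then have ratio: "(q - g) / (p + g + 1) \<le> exp (- (2 * real g) / real n)"
    using balance g n by (intro move_ratio_bound) (auto simp: p_def q_def)
  have "C \<le> CN * exp (- (2 * real g) / real n)"
    unfolding C by (rule mult_left_mono[OF ratio]) (simp add: CN_def)
  then show ?thesis by (simp add: C_def CN_def N_def mult.commute)
qed

text \<open>Exchanging g copies, starting from a nearly balanced pair of counts, divides the number
  of arrangements by at least exp(g(g-1)/n) = exp(2(0 + 1 + ... + (g-1))/n).\<close>
lemma card_perms_exchange:
  assumes ab: "a \<noteq> b" and g: "g \<le> count M b" and balance: "count M b \<le> count M a + 1"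
    and n: "size M \<le> n" "n > 0"
  shows "real (card (permutations_of_multiset (exchange g a b M)))
           \<le> exp (- (real g * (real g - 1)) / real n) * real (card (permutations_of_multiset M))"
  using g
proof (induction g)
  case 0
  then show ?case by (simp add: exchange_def)
next
  case (Suc g)
  have "real (card (permutations_of_multiset (exchange (Suc g) a b M)))
          \<le> exp (- (2 * real g) / real n) * real (card (permutations_of_multiset (exchange g a b M)))"
    using Suc.prems by (intro card_perms_exchange_Suc[OF ab _ balance n(1)]) simp
  also have "\<dots> \<le> exp (- (2 * real g) / real n)
                  * (exp (- (real g * (real g - 1)) / real n) * real (card (permutations_of_multiset M)))"
    using Suc.IH Suc.prems by (intro mult_left_mono) simp_all
  also have "\<dots> = exp (- (real (Suc g) * (real (Suc g) - 1)) / real n)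
                  * real (card (permutations_of_multiset M))"
  proof -
    have "- (2 * real g) / real n + - (real g * (real g - 1)) / real n
            = - (real (Suc g) * (real (Suc g) - 1)) / real n"
      using n(2) by (simp add: field_simps)
    then show ?thesis by (simp add: mult.assoc flip: exp_add)
  qed
  finally show ?case .
qed

section \<open>Tail bounds for words\<close>

lemma words_same_mset:
  assumes v: "v \<in> words s k" and v0: "v0 \<in> words s k" and c: "count (mset v) 1 = count (mset v0) 1"
  shows "mset v = mset v0"
proof (rule multiset_eqI)
  fix x
  have L: "set v \<subseteq> letters" "set v0 \<subseteq> letters" using v v0 by (auto simp: words_def)
  have c1: "count (mset v) (-1) = count (mset v0) (-1)" "count (mset v) 2 = count (mset v0) 2"
    using v v0 c by (auto simp: words_def)
  have c0: "count (mset v) 0 = count (mset v0) 0"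
    using length_count[OF L(1)] length_count[OF L(2)] v v0 c c1 by (simp add: words_def)
  show "count (mset v) x = count (mset v0) x"
  proof (cases "x \<in> letters")
    case True then show ?thesis using c c1 c0 by (auto simp: letters_def)
  next
    case False then show ?thesis using L by (metis count_mset_0_iff subsetD)
  qed
qed

lemma words_with_count_eq:
  assumes v0: "v0 \<in> words s k"
  shows "{v \<in> words s k. count (mset v) 1 = count (mset v0) 1} = permutations_of_multiset (mset v0)"
proof
  show "{v \<in> words s k. count (mset v) 1 = count (mset v0) 1} \<subseteq> permutations_of_multiset (mset v0)"
    using words_same_mset[OF _ v0] by (auto intro: permutations_of_multisetI)
  show "permutations_of_multiset (mset v0) \<subseteq> {v \<in> words s k. count (mset v) 1 = count (mset v0) 1}"
  proof
    fix v assume "v \<in> permutations_of_multiset (mset v0)"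
    then have m: "mset v = mset v0" by (rule permutations_of_multisetD)
    then have "set v = set v0" "length v = length v0" by (metis set_mset_mset, metis size_mset)
    then show "v \<in> {v \<in> words s k. count (mset v) 1 = count (mset v0) 1}" using v0 m by (simp add: words_def)
  qed
qed

lemma card_hitting_exchange:
  assumes ab: "a \<noteq> b" and balance: "count M b \<le> count M a + 1" and n: "size M \<le> n" "n > 0"
    and refl: "\<And>v t. v \<in> permutations_of_multiset M \<Longrightarrow> psum v t = c \<Longrightarrow>
                 mset (reflect c v) = exchange g a b M \<and> g \<le> count M b"
  shows "real (card {v \<in> permutations_of_multiset M. \<exists>t. psum v t = c})
           \<le> exp (- (real g * (real g - 1)) / real n) * real (card (permutations_of_multiset M))"
proof (cases "\<exists>v t. v \<in> permutations_of_multiset M \<and> psum v t = c")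
  case False
  then have none: "{v \<in> permutations_of_multiset M. \<exists>t. psum v t = c} = {}" by blast
  show ?thesis unfolding none by simp
next
  case True
  then obtain v t where "v \<in> permutations_of_multiset M" "psum v t = c" by blast
  then have g: "g \<le> count M b" using refl by blast
  have "card {v \<in> permutations_of_multiset M. \<exists>t. psum v t = c}
          \<le> card (permutations_of_multiset (exchange g a b M))"
    by (rule card_hitting_le) (use refl in blast)
  then have "real (card {v \<in> permutations_of_multiset M. \<exists>t. psum v t = c})
               \<le> real (card (permutations_of_multiset (exchange g a b M)))" by simp
  also have "\<dots> \<le> exp (- (real g * (real g - 1)) / real n) * real (card (permutations_of_multiset M))"
    by (rule card_perms_exchange[OF ab g balance n])
  finally show ?thesis .
qed

lemma letters_of_arrangement:
  assumes "v0 \<in> words s k" "v \<in> permutations_of_multiset (mset v0)" shows "set v \<subseteq> letters"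
proof -
  have "set v = set v0" using permutations_of_multisetD[OF assms(2)] by (metis set_mset_mset)
  then show ?thesis using assms(1) by (simp add: words_def)
qed

text \<open>Among the arrangements of a word of words s k (one more -1 than 1), those reaching the
  level h \<ge> 0 are rare: reflection there exchanges h + 1 letters -1 for letters 1.\<close>
lemma hitting_up:
  assumes v0: "v0 \<in> words s k" and s: "s \<ge> 1"
  shows "real (card {v \<in> permutations_of_multiset (mset v0). \<exists>t. psum v t = int h})
     \<le> exp (- (real (h + 1) * (real (h + 1) - 1)) / real s) * real (card (permutations_of_multiset (mset v0)))"
proof (rule card_hitting_exchange)
  define j where "j = count (mset v0) 1"
  have cM: "count (mset v0) (-1) = j + 1" "size (mset v0) = s" using v0 by (auto simp: words_def j_def)
  then show "count (mset v0) (-1) \<le> count (mset v0) 1 + 1" "size (mset v0) \<le> s" by (simp_all add: j_def)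
  fix v t assume v: "v \<in> permutations_of_multiset (mset v0)" and hit: "psum v t = int h"
  note rc = reflect_counts[OF letters_of_arrangement[OF v0 v] hit, unfolded permutations_of_multisetD[OF v]]
  have hj: "h \<le> j" using rc(2) by (simp add: j_def)
  show "mset (reflect (int h) v) = exchange (h + 1) 1 (-1) (mset v0) \<and> h + 1 \<le> count (mset v0) (-1)"
  proof
    show "mset (reflect (int h) v) = exchange (h + 1) 1 (-1) (mset v0)"
      by (rule multiset_eqI) (use rc cM hj in \<open>auto simp: count_exchange j_def\<close>)
  qed (use cM hj in simp)
qed (use s in simp_all)

text \<open>Likewise for the level -h \<le> -1, where reflection exchanges h - 1 letters 1 for -1.\<close>
lemma hitting_down:
  assumes v0: "v0 \<in> words s k" and s: "s \<ge> 1" and h: "h \<ge> 1"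
  shows "real (card {v \<in> permutations_of_multiset (mset v0). \<exists>t. psum v t = - int h})
     \<le> exp (- (real (h - 1) * (real (h - 1) - 1)) / real s) * real (card (permutations_of_multiset (mset v0)))"
proof (rule card_hitting_exchange)
  define j where "j = count (mset v0) 1"
  have cM: "count (mset v0) (-1) = j + 1" "size (mset v0) = s" using v0 by (auto simp: words_def j_def)
  then show "count (mset v0) 1 \<le> count (mset v0) (-1) + 1" "size (mset v0) \<le> s" by (simp_all add: j_def)
  fix v t assume v: "v \<in> permutations_of_multiset (mset v0)" and hit: "psum v t = - int h"
  note rc = reflect_counts[OF letters_of_arrangement[OF v0 v] hit, unfolded permutations_of_multisetD[OF v]]
  have hj: "h - 1 \<le> j" using rc(1) cM by (simp add: j_def)
  show "mset (reflect (- int h) v) = exchange (h - 1) (-1) 1 (mset v0) \<and> h - 1 \<le> count (mset v0) 1"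
  proof
    show "mset (reflect (- int h) v) = exchange (h - 1) (-1) 1 (mset v0)"
      by (rule multiset_eqI) (use rc cM hj h in \<open>auto simp: count_exchange j_def of_nat_diff\<close>)
  qed (use hj in \<open>simp add: j_def\<close>)
qed (use s in simp_all)

definition tail_factor :: "nat \<Rightarrow> nat \<Rightarrow> real" where
  "tail_factor s h = exp (- (real (h - 1) * (real (h - 1) - 1)) / real s)"

lemma tail_factor_ge: "h \<ge> 1 \<Longrightarrow> exp (- (real (h + 1) * (real (h + 1) - 1)) / real s) \<le> tail_factor s h"
  unfolding tail_factor_def by (simp add: of_nat_diff algebra_simps divide_right_mono)

text \<open>Escape bound among the words of words s k with a fixed number j of letters 1, which
  are exactly the arrangements of one multiset.\<close>
lemma escapes_card_fixed_count:
  assumes s: "s \<ge> 1" and h: "h \<ge> 1"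
  shows "real (card {v \<in> words s k. escapes (int h) v \<and> count (mset v) 1 = j})
     \<le> 2 * tail_factor s h * real (card {v \<in> words s k. count (mset v) 1 = j})"
proof (cases "\<exists>v0. v0 \<in> words s k \<and> count (mset v0) 1 = j")
  case False
  then have none: "{v \<in> words s k. escapes (int h) v \<and> count (mset v) 1 = j} = {}" by blast
  show ?thesis unfolding none by (simp add: tail_factor_def)
next
  case True
  then obtain v0 where v0: "v0 \<in> words s k" "count (mset v0) 1 = j" by blast
  define P where "P = permutations_of_multiset (mset v0)"
  have fibre: "{v \<in> words s k. count (mset v) 1 = j} = P"
    using words_with_count_eq[OF v0(1)] v0(2) by (simp add: P_def)
  define A where "A = {v \<in> P. \<exists>t. psum v t = int h}"
  define B where "B = {v \<in> P. \<exists>t. psum v t = - int h}"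
  have "{v \<in> words s k. escapes (int h) v \<and> count (mset v) 1 = j} \<subseteq> A \<union> B"
  proof
    fix v assume v: "v \<in> {v \<in> words s k. escapes (int h) v \<and> count (mset v) 1 = j}"
    then have "v \<in> P" "set v \<subseteq> letters" using fibre by (auto simp: words_def)
    then show "v \<in> A \<union> B"
      using v psum_hits_above[of v "int h"] psum_hits_below[of v "- int h"]
      unfolding escapes_def A_def B_def by auto
  qed
  then have "card {v \<in> words s k. escapes (int h) v \<and> count (mset v) 1 = j} \<le> card (A \<union> B)"
    by (intro card_mono) (simp_all add: A_def B_def P_def)
  also have "\<dots> \<le> card A + card B" by (rule card_Un_le)
  finally have "real (card {v \<in> words s k. escapes (int h) v \<and> count (mset v) 1 = j})
                  \<le> real (card A) + real (card B)" by linarith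
  moreover have "real (card A) \<le> tail_factor s h * real (card P)"
    using hitting_up[OF v0(1) s, of h] tail_factor_ge[OF h, of s] unfolding A_def P_def
    by (meson mult_right_mono of_nat_0_le_iff order_trans)
  moreover have "real (card B) \<le> tail_factor s h * real (card P)"
    using hitting_down[OF v0(1) s h] unfolding B_def P_def tail_factor_def .
  ultimately show ?thesis unfolding fibre by simp
qed

lemma card_fibres:
  assumes "finite A" "finite J" "f ` A \<subseteq> J"
  shows "card A = (\<Sum>j\<in>J. card {x\<in>A. f x = j})"
  using sum.group[OF assms, of "\<lambda>_. 1::nat"] by simp

lemma escapes_card:
  assumes s: "s \<ge> 1" and h: "h \<ge> 1"
  shows "real (card {v \<in> words s k. escapes (int h) v}) \<le> 2 * tail_factor s h * real (card (words s k))"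
proof -
  have ones: "count (mset v) 1 \<in> {0..s}" if "v \<in> words s k" for v
    using that length_count[of v] by (auto simp: words_def)
  have "card {v \<in> words s k. escapes (int h) v}
          = (\<Sum>j\<in>{0..s}. card {v \<in> {v \<in> words s k. escapes (int h) v}. count (mset v) 1 = j})"
    by (rule card_fibres) (use finite_words ones in auto)
  also have "\<dots> = (\<Sum>j\<in>{0..s}. card {v \<in> words s k. escapes (int h) v \<and> count (mset v) 1 = j})"
    by (intro sum.cong) (auto intro: arg_cong[where f = card])
  finally have "real (card {v \<in> words s k. escapes (int h) v})
      = (\<Sum>j\<in>{0..s}. real (card {v \<in> words s k. escapes (int h) v \<and> count (mset v) 1 = j}))"
    by simp
  also have "\<dots> \<le> (\<Sum>j\<in>{0..s}. 2 * tail_factor s h * real (card {v \<in> words s k. count (mset v) 1 = j}))"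
    by (intro sum_mono escapes_card_fixed_count[OF s h])
  also have "\<dots> = 2 * tail_factor s h * real (\<Sum>j\<in>{0..s}. card {v \<in> words s k. count (mset v) 1 = j})"
    by (simp add: sum_distrib_left)
  also have "(\<Sum>j\<in>{0..s}. card {v \<in> words s k. count (mset v) 1 = j}) = card (words s k)"
    by (rule card_fibres[symmetric]) (use finite_words ones in auto)
  finally show ?thesis .
qed

text \<open>Transferring through the cycle lemma: ballot words reaching 2h are rare, since their
  s rotations are distinct escaping words while all words are s times the ballot words.\<close>
lemma high_ballot_card:
  assumes s: "s \<ge> 1" and h: "h \<ge> 1"
  shows "real (card {w \<in> ballot_words s k. \<exists>t<s. psum w t \<ge> 2 * int h})
     \<le> 2 * tail_factor s h * real (card (ballot_words s k))"
proof -
  define high where "high = {w \<in> ballot_words s k. \<exists>t<s. psum w t \<ge> 2 * int h}"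
  have "card (high \<times> {..<s}) \<le> card {v \<in> words s k. escapes (int h) v}"
  proof (rule card_inj_on_le)
    show "inj_on (\<lambda>(w, r). rotate r w) (high \<times> {..<s})"
      using rotation_bij[OF s, of k] unfolding bij_betw_def
      by (rule inj_on_subset[OF conjunct1]) (auto simp: high_def)
    show "(\<lambda>(w, r). rotate r w) ` (high \<times> {..<s}) \<subseteq> {v \<in> words s k. escapes (int h) v}"
    proof clarsimp
      fix w r assume w: "w \<in> high" and r: "r < s"
      then have "w \<in> words s k" by (simp add: high_def ballot_words_def)
      moreover obtain t where "t < s" "psum w t \<ge> 2 * int h" using w by (auto simp: high_def)
      ultimately show "rotate r w \<in> words s k \<and> escapes (int h) (rotate r w)"
        using r rotate_escapes[of w s r t "int h"] psum_words rotate_words by (auto simp: words_def)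
    qed
  qed (simp add: finite_words)
  then have "real s * real (card high) \<le> real (card {v \<in> words s k. escapes (int h) v})"
    by (metis card_cartesian_product card_lessThan mult.commute of_nat_le_iff of_nat_mult)
  also have "\<dots> \<le> 2 * tail_factor s h * real (card (words s k))" by (rule escapes_card[OF s h])
  also have "\<dots> = real s * (2 * tail_factor s h * real (card (ballot_words s k)))"
    by (simp add: card_words[OF s])
  finally show ?thesis using s unfolding high_def by simp
qed

section \<open>Encoding Dyck paths as ballot words\<close>

definition incr :: "(nat \<Rightarrow> int) \<Rightarrow> nat \<Rightarrow> int" where
  "incr x t = x t - x (t - 1)"

definition pair_letter :: "int \<Rightarrow> int \<Rightarrow> int" where
  "pair_letter d1 d2 =
     (if d1 = 1 \<and> d2 = 1 then 1 else if d1 = -1 \<and> d2 = -1 then -1 else if d1 = -1 then 2 else 0)"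

definition first_step :: "int \<Rightarrow> int" where
  "first_step l = (if l = 1 \<or> l = 0 then 1 else -1)"

definition second_step :: "int \<Rightarrow> int" where
  "second_step l = 2 * weight l - first_step l"

lemma pair_letter_props:
  assumes "d1 = 1 \<or> d1 = -1" "d2 = 1 \<or> d2 = -1"
  shows "2 * weight (pair_letter d1 d2) = d1 + d2" "first_step (pair_letter d1 d2) = d1"
    "pair_letter d1 d2 \<in> letters" "pair_letter d1 d2 \<in> {1, 2} \<longleftrightarrow> d2 = 1"
  using assms by (auto simp: pair_letter_def weight_def first_step_def letters_def)

lemma pair_letter_steps: "l \<in> letters \<Longrightarrow> pair_letter (first_step l) (second_step l) = l"
  by (auto simp: pair_letter_def weight_def first_step_def second_step_def letters_def)

lemma steps_unit:
  "l \<in> letters \<Longrightarrow> (first_step l = 1 \<or> first_step l = -1) \<and> (second_step l = 1 \<or> second_step l = -1)"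
  by (auto simp: weight_def first_step_def second_step_def letters_def)

text \<open>The first and last steps of a Dyck path are forced, so only the s - 1 inner pairs are
  encoded; the final letter -1 makes the total sum -1.\<close>
definition encode :: "nat \<Rightarrow> (nat \<Rightarrow> int) \<Rightarrow> int list" where
  "encode s x = map (\<lambda>i. pair_letter (incr x (2 * i)) (incr x (2 * i + 1))) [1..<s] @ [-1]"

definition decode :: "nat \<Rightarrow> int list \<Rightarrow> nat \<Rightarrow> int" where
  "decode s w t =
     (if t = 0 \<or> 2 * s \<le> t then 0
      else if odd t then 2 * psum w (t div 2) + 1
      else 2 * psum w (t div 2 - 1) + 1 + first_step (w ! (t div 2 - 1)))"

lemma length_encode [simp]: "s \<ge> 1 \<Longrightarrow> length (encode s x) = s"
  by (simp add: encode_def)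

lemma encode_nth:
  "i < s - 1 \<Longrightarrow> encode s x ! i = pair_letter (incr x (2 * (i + 1))) (incr x (2 * (i + 1) + 1))"
  "s \<ge> 1 \<Longrightarrow> encode s x ! (s - 1) = -1"
  by (auto simp: encode_def nth_append)

lemma count_map_upt: "count (mset (map f [a..<n])) y = card {i \<in> {a..<n}. f i = y}"
proof (induction n)
  case 0 then show ?case by simp
next
  case (Suc n)
  show ?case
  proof (cases "a \<le> n")
    case True
    have "{i \<in> {a..<Suc n}. f i = y}
            = (if f n = y then insert n {i \<in> {a..<n}. f i = y} else {i \<in> {a..<n}. f i = y})"
      using True by (auto simp: less_Suc_eq)
    then show ?thesis using Suc True by auto
  next
    case False
    then have "{i \<in> {a..<Suc n}. f i = y} = {}" by auto
    then show ?thesis using False by simp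
  qed
qed

context
  fixes s :: nat and x :: "nat \<Rightarrow> int"
  assumes dyck: "dyck_path s x" and s1: "s \<ge> 1"
begin

lemma incr_unit: "1 \<le> t \<Longrightarrow> t \<le> 2 * s \<Longrightarrow> incr x t = 1 \<or> incr x t = -1"
  using dyck by (auto simp: dyck_path_def incr_def)

lemma path_nonneg: "t \<le> 2 * s \<Longrightarrow> x t \<ge> 0"
  using dyck by (auto simp: dyck_path_def)

lemma path_zero: "x 0 = 0" "x (2 * s) = 0" "t > 2 * s \<Longrightarrow> x t = 0"
  using dyck by (auto simp: dyck_path_def)

lemma path_first: "x 1 = 1"
  using incr_unit[of 1] path_nonneg[of 1] path_zero s1 by (auto simp: incr_def)

lemma path_last: "x (2 * s - 1) = 1"
  using incr_unit[of "2 * s"] path_nonneg[of "2 * s - 1"] path_zero s1 by (auto simp: incr_def)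

lemma pair_unit:
  assumes "1 \<le> i" "i < s"
  shows "incr x (2 * i) = 1 \<or> incr x (2 * i) = -1" "incr x (2 * i + 1) = 1 \<or> incr x (2 * i + 1) = -1"
  using assms incr_unit[of "2 * i"] incr_unit[of "2 * i + 1"] by auto

lemma encode_psum: "t \<le> s - 1 \<Longrightarrow> 2 * psum (encode s x) t + 1 = x (2 * t + 1)"
proof (induction t)
  case 0 then show ?case using path_first by simp
next
  case (Suc t)
  have "t < length (encode s x)" using Suc.prems s1 by simp
  then have "2 * psum (encode s x) (Suc t) + 1 = 2 * psum (encode s x) t + 1 + 2 * weight (encode s x ! t)"
    by (simp add: psum_Suc)
  also have "\<dots> = x (2 * t + 1) + incr x (2 * (t + 1)) + incr x (2 * (t + 1) + 1)"
    using Suc pair_letter_props(1)[OF pair_unit[of "t + 1"]] encode_nth(1)[of t s x] by simp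
  also have "\<dots> = x (2 * Suc t + 1)"
    by (simp add: incr_def numeral_2_eq_2)
  finally show ?case .
qed

lemma encode_letters: "set (encode s x) \<subseteq> letters"
proof
  fix l assume "l \<in> set (encode s x)"
  then obtain i where i: "i < s" "l = encode s x ! i" using s1 by (metis in_set_conv_nth length_encode)
  show "l \<in> letters"
  proof (cases "i = s - 1")
    case True then show ?thesis using i s1 encode_nth(2) by (simp add: letters_def)
  next
    case False
    then show ?thesis using i encode_nth(1) pair_letter_props(3)[OF pair_unit[of "i + 1"]] by simp
  qed
qed

lemma encode_sum: "psum (encode s x) s = -1"
proof -
  have "s - 1 < length (encode s x)" using s1 by simp
  then have "psum (encode s x) (Suc (s - 1)) = psum (encode s x) (s - 1) + weight (encode s x ! (s - 1))"
    by (rule psum_Suc)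
  moreover have "2 * psum (encode s x) (s - 1) + 1 = x (2 * (s - 1) + 1)" by (rule encode_psum) simp
  moreover have "2 * (s - 1) + 1 = 2 * s - 1" using s1 by simp
  ultimately show ?thesis using path_last encode_nth(2)[OF s1] s1 by (simp add: weight_def)
qed

lemma encode_ballot: "ballot (encode s x)"
  unfolding ballot_def
proof (intro allI impI)
  fix t assume "t < length (encode s x)"
  then have t: "t \<le> s - 1" "2 * t + 1 \<le> 2 * s" using s1 by auto
  have "2 * psum (encode s x) t + 1 = x (2 * t + 1)" using t(1) by (rule encode_psum)
  moreover have "x (2 * t + 1) \<ge> 0" using t(2) by (rule path_nonneg)
  ultimately show "psum (encode s x) t \<ge> 0" by linarith
qed

text \<open>The letters 1 and 2 of the code are the inner pairs ending with an up step; together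
  with the first step they are the up steps at odd times.\<close>
lemma count_up_letters:
  "count (mset (encode s x)) 1 + count (mset (encode s x)) 2 = card {i \<in> {1..<s}. incr x (2 * i + 1) = 1}"
proof -
  define f where "f = (\<lambda>i. pair_letter (incr x (2 * i)) (incr x (2 * i + 1)))"
  have "mset (encode s x) = mset (map f [1..<s]) + {#-1#}" by (simp add: encode_def f_def)
  then have "count (mset (encode s x)) 1 = count (mset (map f [1..<s])) 1"
    "count (mset (encode s x)) 2 = count (mset (map f [1..<s])) 2" by simp_all
  then have "count (mset (encode s x)) 1 + count (mset (encode s x)) 2
          = card {i \<in> {1..<s}. f i = 1} + card {i \<in> {1..<s}. f i = 2}"
    unfolding count_map_upt by simp
  also have "\<dots> = card ({i \<in> {1..<s}. f i = 1} \<union> {i \<in> {1..<s}. f i = 2})"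
    by (rule card_Un_disjoint[symmetric]) auto
  also have "{i \<in> {1..<s}. f i = 1} \<union> {i \<in> {1..<s}. f i = 2} = {i \<in> {1..<s}. incr x (2 * i + 1) = 1}"
    using pair_letter_props(4)[OF pair_unit] unfolding f_def by auto
  finally show ?thesis .
qed

lemma odd_ups_pairs: "odd_ups s x = card {i \<in> {1..<s}. incr x (2 * i + 1) = 1} + 1"
proof -
  define U where "U = {i \<in> {1..<s}. incr x (2 * i + 1) = 1}"
  have "{t \<in> {1..2 * s}. odd t \<and> x t - x (t - 1) = 1} = insert 1 ((\<lambda>i. 2 * i + 1) ` U)"
  proof (intro set_eqI iffI)
    fix t assume t: "t \<in> {t \<in> {1..2 * s}. odd t \<and> x t - x (t - 1) = 1}"
    show "t \<in> insert 1 ((\<lambda>i. 2 * i + 1) ` U)"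
    proof (cases "t = 1")
      case False
      then have "t = 2 * (t div 2) + 1" "t div 2 \<in> {1..<s}" using t by auto presburger+
      then show ?thesis using t unfolding U_def incr_def
        by (metis (mono_tags, lifting) add_diff_cancel_right' image_eqI insertI2 mem_Collect_eq)
    qed simp
  next
    fix t assume "t \<in> insert 1 ((\<lambda>i. 2 * i + 1) ` U)"
    then show "t \<in> {t \<in> {1..2 * s}. odd t \<and> x t - x (t - 1) = 1}"
      using path_first path_zero s1 unfolding U_def incr_def by auto
  qed
  moreover have "1 \<notin> (\<lambda>i. 2 * i + 1) ` U" "finite U" unfolding U_def by auto
  moreover have "card ((\<lambda>i. 2 * i + 1) ` U) = card U" by (rule card_image) (auto simp: inj_on_def)
  ultimately show ?thesis unfolding odd_ups_def U_def by simp
qed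

lemma encode_in_ballot_words:
  assumes "odd_ups s x = k" shows "encode s x \<in> ballot_words s k"
proof -
  have "psum (encode s x) s = sum_list (map weight (encode s x))" using s1 by (simp add: psum_def)
  then have "int (count (mset (encode s x)) 1) - int (count (mset (encode s x)) (-1)) = -1"
    using encode_sum sum_weight_count[OF encode_letters] by simp
  then have "count (mset (encode s x)) (-1) = count (mset (encode s x)) 1 + 1" by linarith
  then show ?thesis unfolding ballot_words_def words_def
    using encode_letters s1 count_up_letters odd_ups_pairs assms encode_ballot by auto
qed

text \<open>The path is recovered from its code: the odd-time heights are the partial sums, and
  each even-time height differs from the preceding one by the first step of the letter.\<close>
lemma decode_encode: "decode s (encode s x) = x"
proof
  fix t
  show "decode s (encode s x) t = x t"
  proof (cases "t = 0 \<or> 2 * s \<le> t")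
    case True
    then have "x t = 0" using path_zero by (cases "t = 0") (auto simp: le_less)
    then show ?thesis using True by (simp add: decode_def)
  next
    case False
    show ?thesis
    proof (cases "odd t")
      case True
      have "2 * psum (encode s x) (t div 2) + 1 = x (2 * (t div 2) + 1)"
        using False by (intro encode_psum) auto
      also have "2 * (t div 2) + 1 = t" using True by simp
      finally show ?thesis using False True by (simp add: decode_def)
    next
      case even: False
      define i where "i = t div 2"
      have t: "t = 2 * i" "1 \<le> i" "i < s" using False even i_def by auto
      then have "encode s x ! (i - 1) = pair_letter (incr x t) (incr x (t + 1))"
        using encode_nth(1)[of "i - 1" s x] by simp
      then have "first_step (encode s x ! (i - 1)) = incr x t"
        using pair_letter_props(2)[OF pair_unit[OF t(2,3)]] t by simp
      moreover have "2 * psum (encode s x) (i - 1) + 1 = x (t - 1)"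
      proof -
        have "2 * psum (encode s x) (i - 1) + 1 = x (2 * (i - 1) + 1)" using t by (intro encode_psum) simp
        also have "2 * (i - 1) + 1 = t - 1" using t by simp
        finally show ?thesis .
      qed
      ultimately show ?thesis using False even t by (simp add: decode_def incr_def)
    qed
  qed
qed

lemma path_le_time: "t \<le> 2 * s \<Longrightarrow> x t \<le> int t"
proof (induction t)
  case 0 then show ?case using path_zero by simp
next
  case (Suc t) then show ?case using incr_unit[of "Suc t"] by (auto simp: incr_def)
qed

lemma max_nonneg: "0 \<le> Max (x ` {0..2 * s})"
  using path_zero(1) by (metis Max_ge atLeastAtMost_iff finite_atLeastAtMost finite_imageI image_eqI le0)

lemma max_le: "Max (x ` {0..2 * s}) \<le> 2 * int s"
  using path_le_time by (subst Max_le_iff) force+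

text \<open>A path reaching 2m + 2 has a code whose partial sums reach m (an odd time one step
  before or at the maximum has height at least 2m + 1).\<close>
lemma high_path_high_code:
  assumes "Max (x ` {0..2 * s}) \<ge> 2 * m + 2" and m: "m \<ge> 0"
  shows "\<exists>t<s. psum (encode s x) t \<ge> m"
proof -
  have "Max (x ` {0..2 * s}) \<in> x ` {0..2 * s}" by (rule Max_in) auto
  then obtain t0 where "t0 \<in> {0..2 * s}" "x t0 = Max (x ` {0..2 * s})" by (metis imageE)
  then have t0: "t0 \<le> 2 * s" "x t0 \<ge> 2 * m + 2" using assms by auto
  moreover have "t0 \<noteq> 0"
  proof
    assume "t0 = 0" then show False using t0(2) path_zero(1) m by simp
  qed
  moreover have "t0 \<noteq> 2 * s"
  proof
    assume "t0 = 2 * s" then show False using t0(2) path_zero(2) m by simp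
  qed
  ultimately have t0': "1 \<le> t0" "t0 < 2 * s" using t0 by auto
  obtain t1 where t1: "odd t1" "t1 < 2 * s" "x t1 \<ge> 2 * m + 1"
  proof (cases "odd t0")
    case True then show ?thesis using that t0 t0' by auto
  next
    case False
    then have "odd (t0 - 1)" using t0' by simp
    then show ?thesis using that[of "t0 - 1"] t0 t0' incr_unit[of t0] by (auto simp: incr_def)
  qed
  define i where "i = t1 div 2"
  have "t1 = 2 * i + 1" using t1 i_def by simp
  then have "i < s" "2 * psum (encode s x) i + 1 \<ge> 2 * m + 1" using t1 encode_psum[of i] by auto
  then show ?thesis by (intro exI[of _ i]) auto
qed

end

context
  fixes s k :: nat and w :: "int list"
  assumes ballot_word: "w \<in> ballot_words s k" and s1: "s \<ge> 1"
begin

lemma word_length: "length w = s"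
  using ballot_word by (simp add: ballot_words_def words_def)

lemma word_ballot: "t < s \<Longrightarrow> psum w t \<ge> 0"
  using ballot_word word_length by (simp add: ballot_words_def ballot_def)

lemma word_letter: "i < s \<Longrightarrow> w ! i \<in> letters"
  using ballot_word word_length nth_mem[of i w] by (auto simp: ballot_words_def words_def)

lemma word_psum_prev: "1 \<le> i \<Longrightarrow> i \<le> s \<Longrightarrow> psum w i = psum w (i - 1) + weight (w ! (i - 1))"
  using psum_Suc[of "i - 1" w] word_length by simp

lemma word_last: "psum w (s - 1) = 0" "w ! (s - 1) = -1"
proof -
  have "w \<in> words s k" using ballot_word by (simp add: ballot_words_def)
  then have "psum w s = -1" by (rule psum_words)
  then have sum: "-1 = psum w (s - 1) + weight (w ! (s - 1))" using word_psum_prev[of s] s1 by simp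
  have "psum w (s - 1) \<ge> 0" using word_ballot s1 by simp
  moreover have "\<bar>weight (w ! (s - 1))\<bar> \<le> 1" using weight_bound word_letter s1 by simp
  ultimately show "psum w (s - 1) = 0" using sum by linarith
  then have "weight (w ! (s - 1)) = -1" using sum by simp
  then show "w ! (s - 1) = -1" using word_letter[of "s - 1"] s1 by (auto simp: weight_def letters_def)
qed

lemma decode_odd: "i < s \<Longrightarrow> decode s w (2 * i + 1) = 2 * psum w i + 1"
  by (simp add: decode_def)

lemma decode_even:
  "1 \<le> i \<Longrightarrow> i < s \<Longrightarrow> decode s w (2 * i) = 2 * psum w (i - 1) + 1 + first_step (w ! (i - 1))"
  by (simp add: decode_def)

lemma decode_zero: "decode s w 0 = 0" "t \<ge> 2 * s \<Longrightarrow> decode s w t = 0"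
  by (auto simp: decode_def)

lemma decode_nonneg: "decode s w t \<ge> 0"
proof (cases "t = 0 \<or> 2 * s \<le> t")
  case True then show ?thesis using decode_zero by auto
next
  case False
  define i where "i = t div 2"
  show ?thesis
  proof (cases "odd t")
    case True
    then have "t = 2 * i + 1" "i < s" using i_def False by auto
    then show ?thesis using decode_odd word_ballot by simp
  next
    case even: False
    then have t: "t = 2 * i" "1 \<le> i" "i < s" using i_def False by auto
    then have "first_step (w ! (i - 1)) = 1 \<or> first_step (w ! (i - 1)) = -1"
      using steps_unit word_letter by simp
    then show ?thesis using t decode_even word_ballot[of "i - 1"] by auto
  qed
qed

text \<open>Each step of the decoded path is \<plusminus>1: the steps of the pair i are the two steps
  recovered from the letter w ! (i - 1), the first and last steps are up and down.\<close>
lemma decode_incr: "1 \<le> t \<Longrightarrow> t \<le> 2 * s \<Longrightarrow> incr (decode s w) t = 1 \<or> incr (decode s w) t = -1"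
proof -
  assume t: "1 \<le> t" "t \<le> 2 * s"
  define i where "i = t div 2"
  consider "t = 2 * s" | "t = 1" | "odd t" "t \<noteq> 1" "t < 2 * s" | "even t" "t < 2 * s"
    using t by linarith
  then show ?thesis
  proof cases
    case 1
    then have "t - 1 = 2 * (s - 1) + 1" using s1 by simp
    then show ?thesis using 1 decode_zero decode_odd[of "s - 1"] word_last s1 by (simp add: incr_def)
  next
    case 2
    then show ?thesis using decode_zero decode_odd[of 0] s1 by (simp add: incr_def)
  next
    case 3
    then have "t = 2 * i + 1" "i < s" using i_def by auto
    moreover from this have "1 \<le> i" using 3 by (cases i) auto
    ultimately have ti: "t = 2 * i + 1" "1 \<le> i" "i < s" by simp_all
    have "incr (decode s w) t = 2 * psum w i + 1 - (2 * psum w (i - 1) + 1 + first_step (w ! (i - 1)))"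
      using ti decode_odd decode_even by (simp add: incr_def)
    also have "\<dots> = second_step (w ! (i - 1))" using word_psum_prev[of i] ti by (simp add: second_step_def)
    finally show ?thesis using steps_unit[OF word_letter[of "i - 1"]] ti by simp
  next
    case 4
    then have ti: "t = 2 * i" "1 \<le> i" "i < s" using t i_def by auto
    then have "t - 1 = 2 * (i - 1) + 1" by simp
    then have "incr (decode s w) t = first_step (w ! (i - 1))"
      using ti decode_odd[of "i - 1"] decode_even by (simp add: incr_def)
    then show ?thesis using steps_unit[OF word_letter[of "i - 1"]] ti by simp
  qed
qed

lemma decode_dyck_path: "dyck_path s (decode s w)"
  using decode_zero decode_nonneg decode_incr unfolding dyck_path_def incr_def by auto

lemma encode_decode: "encode s (decode s w) = w"
proof (rule nth_equalityI)
  show "length (encode s (decode s w)) = length w" using s1 word_length by simp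
  fix i assume "i < length (encode s (decode s w))"
  then have i: "i < s" using s1 by simp
  show "encode s (decode s w) ! i = w ! i"
  proof (cases "i = s - 1")
    case True then show ?thesis using encode_nth(2)[OF s1] word_last by simp
  next
    case False
    then have i': "i < s - 1" using i by simp
    have "incr (decode s w) (2 * (i + 1)) = first_step (w ! i)"
      using decode_even[of "i + 1"] decode_odd[of i] i' by (simp add: incr_def)
    moreover have "incr (decode s w) (2 * (i + 1) + 1) = second_step (w ! i)"
      using decode_even[of "i + 1"] decode_odd[of "i + 1"] i' word_psum_prev[of "i + 1"]
      by (simp add: incr_def second_step_def)
    ultimately show ?thesis using encode_nth(1)[OF i'] pair_letter_steps[OF word_letter[OF i]] by simp
  qed
qed

lemma decode_in_X: "decode s w \<in> dyck_X s k"
proof -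
  have "odd_ups s (decode s w) = k"
    using count_up_letters[OF decode_dyck_path s1] odd_ups_pairs[OF decode_dyck_path s1]
      encode_decode ballot_word by (simp add: ballot_words_def words_def)
  then show ?thesis using decode_dyck_path by (simp add: dyck_X_def)
qed

end

lemma encode_bij:
  assumes s1: "s \<ge> 1" shows "bij_betw (encode s) (dyck_X s k) (ballot_words s k)"
proof (rule bij_betw_byWitness[where f' = "decode s"])
  show "\<forall>x\<in>dyck_X s k. decode s (encode s x) = x"
    using decode_encode s1 by (simp add: dyck_X_def)
  show "\<forall>w\<in>ballot_words s k. encode s (decode s w) = w"
    using encode_decode s1 by simp
  show "encode s ` dyck_X s k \<subseteq> ballot_words s k"
    using encode_in_ballot_words s1 by (auto simp: dyck_X_def)
  show "decode s ` ballot_words s k \<subseteq> dyck_X s k"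
    using decode_in_X s1 by auto
qed

lemma finite_dyck_X: "s \<ge> 1 \<Longrightarrow> finite (dyck_X s k)"
  using bij_betw_finite[OF encode_bij[of s k]] finite_ballot_words by simp

text \<open>For 1 \<le> k \<le> s the word 2^(k-1) 0^(s-k) (-1) is a ballot word, so X_{s,k} is nonempty.\<close>
lemma dyck_X_nonempty:
  assumes s1: "s \<ge> 1" and k: "1 \<le> k" "k \<le> s"
  shows "dyck_X s k \<noteq> {}"
proof -
  define u where "u = replicate (k - 1) (2::int) @ replicate (s - k) 0"
  define w where "w = u @ [-1]"
  have weight_u: "\<forall>l\<in>set u. weight l = 0" by (auto simp: u_def weight_def)
  have "ballot w"
    unfolding ballot_def
  proof (intro allI impI)
    fix t assume "t < length w"
    then have "take t w = take t u" using k by (simp add: w_def u_def)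
    then have "psum w t = sum_list (map weight (take t u))" by (simp add: psum_def)
    also have "\<dots> = sum_list (map (\<lambda>_. 0) (take t u))"
      using weight_u by (intro arg_cong[where f = sum_list] map_cong) (auto dest: in_set_takeD)
    finally show "0 \<le> psum w t" by simp
  qed
  moreover have "w \<in> words s k" using k by (auto simp: w_def u_def words_def letters_def)
  ultimately have "w \<in> ballot_words s k" by (simp add: ballot_words_def)
  then show ?thesis using encode_bij[OF s1, of k] unfolding bij_betw_def by blast
qed

lemma path_tail_bound:
  assumes s1: "s \<ge> 1" and h: "h \<ge> 1"
  shows "real (card {x \<in> dyck_X s k. Max (x ` {0..2 * s}) \<ge> 4 * int h + 2})
     \<le> 2 * tail_factor s h * real (card (dyck_X s k))"
proof -
  have bij: "bij_betw (encode s) (dyck_X s k) (ballot_words s k)" by (rule encode_bij[OF s1])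
  have "card {x \<in> dyck_X s k. Max (x ` {0..2 * s}) \<ge> 4 * int h + 2}
      \<le> card {w \<in> ballot_words s k. \<exists>t<s. psum w t \<ge> 2 * int h}"
  proof (rule card_inj_on_le)
    show "inj_on (encode s) {x \<in> dyck_X s k. Max (x ` {0..2 * s}) \<ge> 4 * int h + 2}"
      using bij unfolding bij_betw_def by (rule inj_on_subset[OF conjunct1]) auto
    show "encode s ` {x \<in> dyck_X s k. Max (x ` {0..2 * s}) \<ge> 4 * int h + 2}
            \<subseteq> {w \<in> ballot_words s k. \<exists>t<s. psum w t \<ge> 2 * int h}"
    proof clarify
      fix x assume x: "x \<in> dyck_X s k" "Max (x ` {0..2 * s}) \<ge> 4 * int h + 2"
      then have "\<exists>t<s. psum (encode s x) t \<ge> 2 * int h"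
        using high_path_high_code[OF _ s1, of x "2 * int h"] by (simp add: dyck_X_def)
      moreover have "encode s x \<in> ballot_words s k" using x bij by (auto simp: bij_betw_def)
      ultimately show "encode s x \<in> ballot_words s k \<and> (\<exists>t<s. 2 * int h \<le> psum (encode s x) t)"
        by simp
    qed
  qed (simp add: finite_ballot_words)
  then have "real (card {x \<in> dyck_X s k. Max (x ` {0..2 * s}) \<ge> 4 * int h + 2})
      \<le> real (card {w \<in> ballot_words s k. \<exists>t<s. psum w t \<ge> 2 * int h})" by simp
  also have "\<dots> \<le> 2 * tail_factor s h * real (card (ballot_words s k))"
    by (rule high_ballot_card[OF s1 h])
  also have "card (ballot_words s k) = card (dyck_X s k)" using bij_betw_same_card[OF bij] by simp
  finally show ?thesis .
qed

section \<open>The exponential moment of the maximum\<close>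

text \<open>Block length L = ceil(sqrt s): the Gaussian tail is evaluated at multiples of 4L.\<close>
lemma ceiling_sqrt_bounds:
  assumes s1: "s \<ge> 1"
  defines "L \<equiv> nat \<lceil>sqrt (real s)\<rceil>"
  shows "L \<ge> 1" "real L \<le> 2 * sqrt (real s)" "real L \<le> 2 * real s" "real s \<le> real L ^ 2"
proof -
  have sq1: "sqrt (real s) \<ge> 1" using s1 by simp
  have "sqrt (real s) \<le> sqrt (real s * real s)" using s1 by (intro real_sqrt_le_mono) simp
  then have sqs: "sqrt (real s) \<le> real s" by simp
  have L: "real L = of_int \<lceil>sqrt (real s)\<rceil>" using sq1 by (simp add: L_def)
  have lo: "sqrt (real s) \<le> real L" and hi: "real L \<le> sqrt (real s) + 1" unfolding L by linarith+
  show "L \<ge> 1" using lo sq1 by linarith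
  show "real L \<le> 2 * sqrt (real s)" "real L \<le> 2 * real s" using hi sq1 sqs by linarith+
  have "sqrt (real s) ^ 2 \<le> real L ^ 2" using lo sq1 by (intro power_mono) auto
  then show "real s \<le> real L ^ 2" by simp
qed

lemma tail_factor_block:
  assumes s1: "s \<ge> 1" and L: "real s \<le> real L ^ 2" "real L \<le> 2 * real s" and nL: "n * L \<ge> 2"
  shows "tail_factor s (n * L - 1) \<le> exp (12 * real n - real n ^ 2)"
proof -
  define N where "N = real n"
  define R where "R = real L"
  define S where "S = real s"
  have S: "S > 0" using s1 by (simp add: S_def)
  have h: "real (n * L - 1 - 1) = N * R - 2" using nL by (simp add: N_def R_def of_nat_diff)
  have N0: "N \<ge> 0" by (simp add: N_def)
  have "N^2 * S \<le> N^2 * R^2" using L(1) N0 by (simp add: R_def S_def mult_left_mono)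
  moreover have "N * R \<le> N * (2 * S)" using L(2) N0 by (intro mult_left_mono) (auto simp: R_def S_def)
  moreover have "N * S \<ge> 0" using N0 S by simp
  moreover have "(N * R - 2) * (N * R - 3) = N^2 * R^2 - 5 * (N * R) + 6"
    by (simp add: algebra_simps power2_eq_square)
  ultimately have "(12 * N - N^2) * S \<ge> - ((N * R - 2) * (N * R - 3))"
    by (simp add: algebra_simps)
  then have "- ((N * R - 2) * (N * R - 3)) / S \<le> 12 * N - N^2"
    by (rule pos_divide_le_eq[OF S, THEN iffD2])
  then show ?thesis unfolding tail_factor_def h by (simp add: N_def S_def algebra_simps)
qed

lemma block_tail_bound:
  assumes s1: "s \<ge> 1"
  defines "L \<equiv> nat \<lceil>sqrt (real s)\<rceil>"
  shows "real (card {x \<in> dyck_X s k. Max (x ` {0..2 * s}) \<ge> int (4 * L * n)})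
     \<le> 2 * exp (12 * real n - real n ^ 2) * real (card (dyck_X s k))"
proof -
  note L = ceiling_sqrt_bounds[OF s1, folded L_def]
  let ?high = "\<lambda>m. {x \<in> dyck_X s k. Max (x ` {0..2 * s}) \<ge> m}"
  have fin: "finite (dyck_X s k)" by (rule finite_dyck_X[OF s1])
  show ?thesis
  proof (cases "n * L \<le> 1")
    case True
    moreover have "n \<le> n * L" using L(1) by simp
    ultimately have "n = 0 \<or> n = 1" by linarith
    then have "0 \<le> 12 * real n - real n ^ 2" by auto
    then have "1 \<le> exp (12 * real n - real n ^ 2)" by simp
    then have "1 \<le> 2 * exp (12 * real n - real n ^ 2)" by linarith
    then have "real (card (dyck_X s k)) \<le> 2 * exp (12 * real n - real n ^ 2) * real (card (dyck_X s k))"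
      using mult_right_mono[of 1 _ "real (card (dyck_X s k))"] by simp
    moreover have "real (card (?high (int (4 * L * n)))) \<le> real (card (dyck_X s k))"
      using fin by (simp add: card_mono)
    ultimately show ?thesis by linarith
  next
    case False
    define h where "h = n * L - 1"
    have h1: "h \<ge> 1" using False h_def by simp
    have "1 \<le> n * L" using False by linarith
    then have "int h = int (n * L) - 1" unfolding h_def by (simp add: of_nat_diff)
    then have "4 * int h + 2 \<le> int (4 * L * n)" by (simp add: algebra_simps)
    then have "?high (int (4 * L * n)) \<subseteq> ?high (4 * int h + 2)" by auto
    then have "real (card (?high (int (4 * L * n)))) \<le> real (card (?high (4 * int h + 2)))"
      using fin by (simp add: card_mono)
    also have "\<dots> \<le> 2 * tail_factor s h * real (card (dyck_X s k))"
      by (rule path_tail_bound[OF s1 h1])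
    also have "\<dots> \<le> 2 * exp (12 * real n - real n ^ 2) * real (card (dyck_X s k))"
      using tail_factor_block[OF s1 L(4,3), of n] False unfolding h_def by (simp add: mult_right_mono)
    finally show ?thesis .
  qed
qed

lemma sum_exp_by_layers:
  fixes M :: "'a \<Rightarrow> int" and c :: real
  assumes fin: "finite X" and L: "L > 0" and c: "c \<ge> 0"
    and M: "\<And>x. x \<in> X \<Longrightarrow> 0 \<le> M x \<and> M x \<le> int N"
  shows "(\<Sum>x\<in>X. exp (c * M x))
           \<le> (\<Sum>n\<le>N. exp (c * real (L * (n + 1))) * real (card {x \<in> X. M x \<ge> int (L * n)}))"
proof -
  define g where "g n = exp (c * real (L * (n + 1)))" for n
  have layer: "exp (c * M x) \<le> (\<Sum>n\<le>N. if M x \<ge> int (L * n) then g n else 0)" if x: "x \<in> X" for x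
  proof -
    define n0 where "n0 = nat (M x) div L"
    have "L * n0 \<le> nat (M x)" unfolding n0_def by (rule times_div_less_eq_dividend)
    moreover have "nat (M x) < L * (n0 + 1)"
      using dividend_less_times_div[OF L, of "nat (M x)"] by (simp add: n0_def algebra_simps)
    moreover have "n0 \<le> nat (M x)" unfolding n0_def by (rule div_le_dividend)
    ultimately have lo: "M x \<ge> int (L * n0)" and hi: "M x \<le> int (L * (n0 + 1))" and n0: "n0 \<le> N"
      using M[OF x] by linarith+
    have "real_of_int (M x) \<le> real (L * (n0 + 1))" using hi by (metis of_int_le_iff of_int_of_nat_eq)
    then have "c * M x \<le> c * real (L * (n0 + 1))" using c by (rule mult_left_mono)
    then have "exp (c * M x) \<le> g n0" by (simp add: g_def)
    also have "\<dots> = (if M x \<ge> int (L * n0) then g n0 else 0)" using lo by simp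
    also have "\<dots> \<le> (\<Sum>n\<le>N. if M x \<ge> int (L * n) then g n else 0)"
      by (rule member_le_sum[where f = "\<lambda>n. if M x \<ge> int (L * n) then g n else 0"])
         (use n0 in \<open>auto simp: g_def\<close>)
    finally show ?thesis .
  qed
  have "(\<Sum>x\<in>X. exp (c * M x)) \<le> (\<Sum>x\<in>X. \<Sum>n\<le>N. if M x \<ge> int (L * n) then g n else 0)"
    by (rule sum_mono) (rule layer)
  also have "\<dots> = (\<Sum>n\<le>N. \<Sum>x\<in>X. if M x \<ge> int (L * n) then g n else 0)"
    by (rule sum.swap)
  also have "\<dots> = (\<Sum>n\<le>N. g n * real (card {x \<in> X. M x \<ge> int (L * n)}))"
    by (simp add: sum.If_cases[OF fin] Int_def mult.commute)
  finally show ?thesis unfolding g_def .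
qed

lemma sum_exp_neg_le_2: "(\<Sum>n\<le>N. exp (- real n)) \<le> (2::real)"
proof -
  define q where "q = exp (-1::real)"
  have "exp (1::real) \<ge> 2" using exp_ge_add_one_self[of "1::real"] by simp
  then have q2: "q \<le> 1/2" unfolding q_def by (simp add: exp_minus field_simps)
  have q0: "q > 0" unfolding q_def by simp
  have "(\<Sum>n\<le>N. exp (- real n)) = (\<Sum>n\<le>N. q ^ n)"
    unfolding q_def by (simp add: exp_of_nat_mult[symmetric])
  also have "\<dots> = (1 - q ^ Suc N) / (1 - q)" using q2 by (simp add: sum_gp0)
  also have "\<dots> \<le> 1 / (1 - q)" using q2 q0 by (intro divide_right_mono) auto
  also have "\<dots> \<le> 2" using q2 by (simp add: field_simps)
  finally show ?thesis .
qed

lemma quadratic_exponent_bound: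
  fixes a n :: real
  shows "8 * a * (n + 1) + (12 * n - n ^ 2) \<le> 8 * a + (8 * a + 13) ^ 2 - n"
proof -
  have "0 \<le> (2 * n - (8 * a + 13)) ^ 2 + 3 * (8 * a + 13) ^ 2" by simp
  then show ?thesis by (simp add: power2_eq_square algebra_simps)
qed

lemma layer_bound:
  assumes s1: "s \<ge> 1" and a: "a > 0"
  defines "L \<equiv> nat \<lceil>sqrt (real s)\<rceil>"
  shows "exp (a / sqrt (real s) * real (4 * L * (n + 1)))
           * real (card {x \<in> dyck_X s k. Max (x ` {0..2 * s}) \<ge> int (4 * L * n)})
         \<le> 2 * exp (8 * a + (8 * a + 13) ^ 2) * real (card (dyck_X s k)) * exp (- real n)"
proof -
  have sq: "sqrt (real s) > 0" using s1 by simp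
  have "real (4 * L * (n + 1)) = 4 * real L * (real n + 1)" by (simp add: algebra_simps)
  also have "\<dots> \<le> 4 * (2 * sqrt (real s)) * (real n + 1)"
    using ceiling_sqrt_bounds(2)[OF s1] by (intro mult_right_mono) (auto simp: L_def)
  finally have "a / sqrt (real s) * real (4 * L * (n + 1)) \<le> a / sqrt (real s) * (8 * sqrt (real s) * (real n + 1))"
    using a sq by (intro mult_left_mono) auto
  also have "\<dots> = 8 * a * (real n + 1)" using sq by simp
  finally have "exp (a / sqrt (real s) * real (4 * L * (n + 1))) \<le> exp (8 * a * (real n + 1))" by simp
  moreover have "real (card {x \<in> dyck_X s k. Max (x ` {0..2 * s}) \<ge> int (4 * L * n)})
                   \<le> 2 * exp (12 * real n - real n ^ 2) * real (card (dyck_X s k))"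
    using block_tail_bound[OF s1, of k n] unfolding L_def .
  ultimately have "exp (a / sqrt (real s) * real (4 * L * (n + 1)))
                     * real (card {x \<in> dyck_X s k. Max (x ` {0..2 * s}) \<ge> int (4 * L * n)})
                   \<le> exp (8 * a * (real n + 1)) * (2 * exp (12 * real n - real n ^ 2) * real (card (dyck_X s k)))"
    by (rule mult_mono) simp_all
  also have "\<dots> = 2 * exp (8 * a * (real n + 1) + (12 * real n - real n ^ 2)) * real (card (dyck_X s k))"
    by (simp add: exp_add)
  also have "\<dots> \<le> 2 * exp (8 * a + (8 * a + 13) ^ 2 - real n) * real (card (dyck_X s k))"
    using quadratic_exponent_bound[of a "real n"] by (intro mult_right_mono mult_left_mono) simp_all
  also have "\<dots> = 2 * exp (8 * a + (8 * a + 13) ^ 2) * real (card (dyck_X s k)) * exp (- real n)"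
    by (simp add: exp_diff exp_minus field_simps)
  finally show ?thesis .
qed

lemma exp_moment_sum:
  assumes s1: "s \<ge> 1" and a: "a > 0"
  shows "(\<Sum>x\<in>dyck_X s k. exp (a * real_of_int (Max (x ` {0..2 * s})) / sqrt (real s)))
           \<le> 4 * exp (8 * a + (8 * a + 13) ^ 2) * real (card (dyck_X s k))"
proof -
  define L where "L = nat \<lceil>sqrt (real s)\<rceil>"
  define M where "M x = Max (x ` {0..2 * s})" for x :: "nat \<Rightarrow> int"
  define c where "c = a / sqrt (real s)"
  define C where "C = 2 * exp (8 * a + (8 * a + 13) ^ 2) * real (card (dyck_X s k))"
  have c0: "c \<ge> 0" using a by (simp add: c_def)
  have M: "0 \<le> M x \<and> M x \<le> int (2 * s)" if "x \<in> dyck_X s k" for x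
    using max_nonneg[of s x] max_le[of s x] that s1 by (auto simp: M_def dyck_X_def)
  have "(\<Sum>x\<in>dyck_X s k. exp (a * real_of_int (Max (x ` {0..2 * s})) / sqrt (real s)))
          = (\<Sum>x\<in>dyck_X s k. exp (c * M x))"
    unfolding M_def c_def by (intro sum.cong) simp_all
  also have "\<dots> \<le> (\<Sum>n\<le>2 * s. exp (c * real (4 * L * (n + 1)))
                                 * real (card {x \<in> dyck_X s k. M x \<ge> int (4 * L * n)}))"
    using finite_dyck_X[OF s1] ceiling_sqrt_bounds(1)[OF s1] c0 M s1
    unfolding L_def by (intro sum_exp_by_layers) auto
  also have "\<dots> \<le> (\<Sum>n\<le>2 * s. C * exp (- real n))"
    using layer_bound[OF s1 a] unfolding C_def c_def L_def M_def by (intro sum_mono) blast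
  also have "\<dots> = C * (\<Sum>n\<le>2 * s. exp (- real n))" by (simp add: sum_distrib_left)
  also have "\<dots> \<le> C * 2" by (intro mult_left_mono sum_exp_neg_le_2) (simp add: C_def)
  also have "\<dots> = 4 * exp (8 * a + (8 * a + 13) ^ 2) * real (card (dyck_X s k))"
    by (simp add: C_def)
  finally show ?thesis .
qed

theorem lemma3p1:
  fixes \<alpha> \<alpha>' a :: real
  assumes "0 < \<alpha>'" "\<alpha>' < \<alpha>" "\<alpha> < 1" "a > 0"
  shows "\<exists>b>0. \<forall>s::nat. s \<ge> 1 \<longrightarrow>
           (\<forall>k::nat. \<alpha>' * real s \<le> real k \<and> real k \<le> \<alpha> * real s \<longrightarrow>
              E_unif s k (\<lambda>x. exp (a * real_of_int (Max (x ` {0..2 * s})) / sqrt (real s))) \<le> b)"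
proof (intro exI[of _ "4 * exp (8 * a + (8 * a + 13) ^ 2)"] conjI allI impI)
  fix s k :: nat
  let ?f = "\<lambda>x. exp (a * real_of_int (Max (x ` {0..2 * s})) / sqrt (real s))"
  assume s1: "s \<ge> 1" and k: "\<alpha>' * real s \<le> real k \<and> real k \<le> \<alpha> * real s"
  have "0 < \<alpha>' * real s" using assms(1) s1 by simp
  moreover have "\<alpha> * real s < real s" using assms(3) s1 by simp
  ultimately have "1 \<le> k" "k \<le> s" using k by linarith+
  then have ne: "dyck_X s k \<noteq> {}" and fin: "finite (dyck_X s k)"
    using dyck_X_nonempty[OF s1] finite_dyck_X[OF s1] by auto
  then have card: "real (card (dyck_X s k)) > 0" by (simp add: card_gt_0_iff)
  have "E_unif s k ?f = (\<Sum>x\<in>dyck_X s k. ?f x) / real (card (dyck_X s k))"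
    unfolding E_unif_def by (rule integral_pmf_of_set[OF ne fin])
  also have "\<dots> \<le> 4 * exp (8 * a + (8 * a + 13) ^ 2) * real (card (dyck_X s k)) / real (card (dyck_X s k))"
    using exp_moment_sum[OF s1 assms(4), of k] card by (intro divide_right_mono) simp_all
  also have "\<dots> = 4 * exp (8 * a + (8 * a + 13) ^ 2)" using card by simp
  finally show "E_unif s k ?f \<le> 4 * exp (8 * a + (8 * a + 13) ^ 2)" .
qed simp

end
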